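(* Let $d \geq 3$ and $n \geq 2$ be primes with $\gcd(d,n) = 1$. Let $u \in S_{d,n}$ and let $[a_1,\dots,a_r]$ be a partition of $u$. Then there is some $i \in \{1,\dots,r\}$ with $\gcd(a_i, nd) = 1$.
   Context: Let $n^\ast \in \{1,\dots,d-1\}$ be the unique integer with $n^\ast \equiv -n \pmod d$, and $S_{d,n} = \{ n^\ast + jd : j \in \mathbb{Z}_{\geq 0},\ n^\ast + jd < n(d-1)\}$. A partition of a positive integer $u$ is a non-empty multiset $[a_1,\dots,a_r]$ of positive integers with $\sum a_i = u$. *)

theory Defs
  imports Main "HOL-Library.Multiset" "HOL-Computational_Algebra.Primes"
begin

(* n^* : the unique integer in {1..d-1} with n^* = -n (mod d). For gcd(d,n)=1 and d>=2
   this is d - (n mod d). *)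
definition nstar :: "nat \<Rightarrow> nat \<Rightarrow> nat" where
  "nstar d n = (THE m. m \<in> {1..d-1} \<and> int m mod int d = (- int n) mod int d)"

definition S_set :: "nat \<Rightarrow> nat \<Rightarrow> nat set" where
  "S_set d n = {nstar d n + j * d | j. nstar d n + j * d < n * (d - 1)}"

definition is_partition :: "nat multiset \<Rightarrow> nat \<Rightarrow> bool" where
  "is_partition A u \<longleftrightarrow> A \<noteq> {#} \<and> (\<forall>a\<in>#A. a > 0) \<and> sum_mset A = u"

end

theory Submission
  imports Defs
begin

text \<open>If no part were coprime to \<open>n d\<close>, each part would be a multiple of the prime \<open>n\<close> or of
the prime \<open>d\<close>, so \<open>u = n k + d m\<close>. Every element of \<open>S\<^sub>d\<^sub>,\<^sub>n\<close> is \<open>\<equiv> -n (mod d)\<close>,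
hence \<open>d\<close> divides \<open>n (k + 1)\<close> and thus \<open>k + 1\<close>; then \<open>u \<ge> n k \<ge> n (d - 1)\<close>, contradicting
the bound \<open>u < n (d - 1)\<close> in the definition of \<open>S\<^sub>d\<^sub>,\<^sub>n\<close>.\<close>

lemma nstar_eq:
  assumes "d > 0" and "\<not> d dvd n"
  shows "nstar d n = d - n mod d"
proof -
  have pos: "0 < n mod d" and less: "n mod d < d"
    using assms by (simp_all add: mod_greater_zero_iff_not_dvd)
  have cong: "int (d - n mod d) mod int d = - int n mod int d"
    using less by (simp add: of_nat_diff zmod_int mod_minus_eq)
  show ?thesis
    unfolding nstar_def
  proof (rule the_equality)
    show "d - n mod d \<in> {1..d-1} \<and> int (d - n mod d) mod int d = - int n mod int d"
      using pos less cong by auto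
  next
    fix m
    assume m: "m \<in> {1..d-1} \<and> int m mod int d = - int n mod int d"
    then have "int m = int m mod int d" by auto
    also have "\<dots> = int (d - n mod d) mod int d" using m cong by simp
    also have "\<dots> = int (d - n mod d)" using pos less by (intro mod_pos_pos_trivial) auto
    finally show "m = d - n mod d" by simp
  qed
qed

lemma dvd_nstar_add:
  assumes "d > 0" and "\<not> d dvd n"
  shows "d dvd nstar d n + n"
proof -
  have "nstar d n + n = d + (n - n mod d)"
    using assms by (simp add: nstar_eq)
  also have "\<dots> = d + d * (n div d)" by (simp only: minus_mod_eq_mult_div)
  finally show ?thesis by simp
qed

lemma S_set_memberD:
  assumes "u \<in> S_set d n" and "d > 0" and "\<not> d dvd n"
  shows "d dvd u + n" and "u < n * (d - 1)"
proof -
  obtain j where u: "u = nstar d n + j * d" and bound: "u < n * (d - 1)"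
    using assms(1) unfolding S_set_def by blast
  have "d dvd (nstar d n + n) + j * d"
    using dvd_nstar_add [OF assms(2,3)] by (rule dvd_add) simp_all
  then show "d dvd u + n" using u by (simp add: ac_simps)
  show "u < n * (d - 1)" by (fact bound)
qed

lemma sum_mset_eq_lincomb:
  fixes A :: "nat multiset"
  assumes "\<forall>a\<in>#A. n dvd a \<or> d dvd a"
  shows "\<exists>k m. sum_mset A = n * k + d * m"
  using assms
proof (induction A)
  case empty
  show ?case by simp
next
  case (add a A)
  then obtain k m where IH: "sum_mset A = n * k + d * m" by auto
  have "n dvd a \<or> d dvd a" using add.prems by simp
  then consider (n) i where "a = n * i" | (d) i where "a = d * i"
    unfolding dvd_def by blast
  then show ?case
  proof cases
    case n
    then have "sum_mset (add_mset a A) = n * (k + i) + d * m" using IH by (simp add: algebra_simps)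
    then show ?thesis by blast
  next
    case d
    then have "sum_mset (add_mset a A) = n * k + d * (m + i)" using IH by (simp add: algebra_simps)
    then show ?thesis by blast
  qed
qed

lemma lincomb_ge_if_dvd:
  fixes d n k m :: nat
  assumes "coprime d n" and "d dvd n * k + d * m + n"
  shows "n * (d - 1) \<le> n * k + d * m"
proof -
  have "d dvd n * (k + 1) + d * m" using assms(2) by (simp add: algebra_simps)
  then have "d dvd n * (k + 1)" by (simp add: dvd_add_left_iff)
  then have "d dvd k + 1" using coprime_dvd_mult_right_iff [OF assms(1)] by blast
  then have "d - 1 \<le> k" by (auto dest: dvd_imp_le)
  then show ?thesis by (simp add: trans_le_add1)
qed

lemma not_coprime_mult_primesD:
  fixes a p q :: nat
  assumes "prime p" and "prime q" and "\<not> coprime a (p * q)"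
  shows "p dvd a \<or> q dvd a"
  using assms by (metis coprime_commute coprime_mult_right_iff prime_imp_coprime)

theorem lemma3p9:
  fixes d n u :: nat and A :: "nat multiset"
  assumes "prime d" and "d \<ge> 3" and "prime n" and "n \<ge> 2" and "coprime d n"
    and "u \<in> S_set d n"
    and "is_partition A u"
  shows "\<exists>a\<in>#A. coprime a (n * d)"
proof (rule ccontr)
  assume "\<not> (\<exists>a\<in>#A. coprime a (n * d))"
  then have "\<forall>a\<in>#A. n dvd a \<or> d dvd a"
    using assms(1,3) not_coprime_mult_primesD by blast
  then obtain k m where u: "u = n * k + d * m"
    using sum_mset_eq_lincomb assms(7) unfolding is_partition_def by blast
  have "d > 0" and "\<not> d dvd n"
    using assms(1,5) prime_gt_0_nat coprime_absorb_left not_prime_unit by auto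
  with assms(6) have "d dvd u + n" and "u < n * (d - 1)"
    by (fact S_set_memberD)+
  moreover have "n * (d - 1) \<le> u"
    using lincomb_ge_if_dvd assms(5) \<open>d dvd u + n\<close> u by blast
  ultimately show False by simp
qed

end
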